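(* Let $g\mapsto g^*$ be an involution on a group $G$ and let $\sigma\colon G\to\{\pm1\}$ be a group homomorphism (orientation) which is not identically $1$; set $N=\ker\sigma$. Let $R$ be a commutative ring with $1$ and of characteristic different from $2$. For $\alpha=\sum_{g\in G}\alpha_g g\in RG$ define $\alpha^{\sharp}=\sum_{g\in G}\alpha_g\sigma(g)g^*$, and let $(RG)^-=\{\alpha\in RG\mid \alpha^{\sharp}=-\alpha\}$ be the set of skew-symmetric elements. Assume $*$ and $\sigma$ are compatible, i.e. $\sigma(g)=\sigma(g^* )$ for all $g\in G$. If the elements of $(RG)^-$ anticommute, then either (1) $\operatorname{char}R=4$, $G$ is abelian, $*$ is the identity on $N$, and $x^*\ne x$ for all $x\notin N$; or (2) $\operatorname{char}R=4$, $G$ is an SLC group with $*$ the canonical involution, and $x^*\ne x$ for all $x\notin N$. Conversely, if $G$ is a group with an index $2$ subgroup $N$ and $\sigma\colon G\to\{\pm1\}$ is the homomorphism with kernel $N$, then $(RG)^-$ is an anticommutative set in either of the situations (1) or (2).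
   Context: A group $G$ is SLC if it has a unique nonidentity commutator $s$ (necessarily central, with $s^2=1$) and the limited commutativity property: two elements $g,h\in G$ commute only if one of $g$, $h$, $gh$ is central. The canonical involution on an SLC group is $g^*=g$ if $g$ is central and $g^*=sg$ otherwise. The map $\sharp$ is an involution of $RG$ (an oriented group involution). *)

theory Defs
  imports "HOL-Algebra.Group"
begin

(* Elements of the group ring RG: finitely supported coefficient functions on carrier G *)
definition gr_elem :: "('g, 'b) monoid_scheme \<Rightarrow> ('g \<Rightarrow> 'r::comm_ring_1) \<Rightarrow> bool" where
  "gr_elem G a \<longleftrightarrow> finite {g. a g \<noteq> 0} \<and> (\<forall>g. g \<notin> carrier G \<longrightarrow> a g = 0)"

definition gr_mult :: "('g, 'b) monoid_scheme \<Rightarrow> ('g \<Rightarrow> 'r::comm_ring_1) \<Rightarrow> ('g \<Rightarrow> 'r) \<Rightarrow> 'g \<Rightarrow> 'r" where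
  "gr_mult G a b = (\<lambda>x. if x \<in> carrier G
      then (\<Sum>g\<in>{g \<in> carrier G. a g \<noteq> 0}. a g * b (inv\<^bsub>G\<^esub> g \<otimes>\<^bsub>G\<^esub> x)) else 0)"

(* a-sharp = sum_g a_g sigma(g) star(g); coefficient at x is a_(star x) sigma(star x) *)
definition gr_sharp :: "('g, 'b) monoid_scheme \<Rightarrow> ('g \<Rightarrow> 'g) \<Rightarrow> ('g \<Rightarrow> int) \<Rightarrow> ('g \<Rightarrow> 'r::comm_ring_1) \<Rightarrow> 'g \<Rightarrow> 'r" where
  "gr_sharp G star \<sigma> a = (\<lambda>x. if x \<in> carrier G then of_int (\<sigma> (star x)) * a (star x) else 0)"

definition gr_skew :: "('g, 'b) monoid_scheme \<Rightarrow> ('g \<Rightarrow> 'g) \<Rightarrow> ('g \<Rightarrow> int) \<Rightarrow> ('g \<Rightarrow> 'r::comm_ring_1) set" where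
  "gr_skew G star \<sigma> = {a. gr_elem G a \<and> gr_sharp G star \<sigma> a = (\<lambda>x. - a x)}"

definition anticommuting_set :: "('g, 'b) monoid_scheme \<Rightarrow> ('g \<Rightarrow> 'r::comm_ring_1) set \<Rightarrow> bool" where
  "anticommuting_set G S \<longleftrightarrow> (\<forall>a\<in>S. \<forall>b\<in>S. gr_mult G a b = (\<lambda>x. - gr_mult G b a x))"

definition group_involution :: "('g, 'b) monoid_scheme \<Rightarrow> ('g \<Rightarrow> 'g) \<Rightarrow> bool" where
  "group_involution G star \<longleftrightarrow> (\<forall>g\<in>carrier G. star g \<in> carrier G) \<and>
     (\<forall>g\<in>carrier G. \<forall>h\<in>carrier G. star (g \<otimes>\<^bsub>G\<^esub> h) = star h \<otimes>\<^bsub>G\<^esub> star g) \<and>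
     (\<forall>g\<in>carrier G. star (star g) = g)"

definition orientation :: "('g, 'b) monoid_scheme \<Rightarrow> ('g \<Rightarrow> int) \<Rightarrow> bool" where
  "orientation G \<sigma> \<longleftrightarrow> (\<forall>g\<in>carrier G. \<sigma> g \<in> {1, -1}) \<and>
     (\<forall>g\<in>carrier G. \<forall>h\<in>carrier G. \<sigma> (g \<otimes>\<^bsub>G\<^esub> h) = \<sigma> g * \<sigma> h)"

definition central_elem :: "('g, 'b) monoid_scheme \<Rightarrow> 'g \<Rightarrow> bool" where
  "central_elem G g \<longleftrightarrow> g \<in> carrier G \<and> (\<forall>h\<in>carrier G. g \<otimes>\<^bsub>G\<^esub> h = h \<otimes>\<^bsub>G\<^esub> g)"

definition group_commutator :: "('g, 'b) monoid_scheme \<Rightarrow> 'g \<Rightarrow> 'g \<Rightarrow> 'g" where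
  "group_commutator G g h = inv\<^bsub>G\<^esub> g \<otimes>\<^bsub>G\<^esub> inv\<^bsub>G\<^esub> h \<otimes>\<^bsub>G\<^esub> g \<otimes>\<^bsub>G\<^esub> h"

definition SLC_group :: "('g, 'b) monoid_scheme \<Rightarrow> 'g \<Rightarrow> bool" where
  "SLC_group G s \<longleftrightarrow> s \<in> carrier G \<and> s \<noteq> \<one>\<^bsub>G\<^esub> \<and>
     {group_commutator G g h | g h. g \<in> carrier G \<and> h \<in> carrier G} = {\<one>\<^bsub>G\<^esub>, s} \<and>
     (\<forall>g\<in>carrier G. \<forall>h\<in>carrier G. g \<otimes>\<^bsub>G\<^esub> h = h \<otimes>\<^bsub>G\<^esub> g \<longrightarrow>
        central_elem G g \<or> central_elem G h \<or> central_elem G (g \<otimes>\<^bsub>G\<^esub> h))"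

definition canonical_involution :: "('g, 'b) monoid_scheme \<Rightarrow> 'g \<Rightarrow> 'g \<Rightarrow> 'g" where
  "canonical_involution G s g = (if central_elem G g then g else s \<otimes>\<^bsub>G\<^esub> g)"

end

theory Submission
  imports Defs "HOL-Library.Indicator_Function"
begin

text \<open>
  For $x \notin N$ the element $x + x^*$ is skew, and evaluating products of two such test
  elements shows that anticommutativity forces $x^* \neq x$, $4 = 0$, and, for $x, y \notin N$,
  $xy = x^* y^*$ and $xy \in \{yx, y^* x\}$. Hence $y^* = d\,y$ for all $y \notin N$ with a fixed
  $d \in N$, which turns out to be central of order $2$, with $n^* = y^{-1} n y$ and
  $n^* \in \{n, dn\}$ for $n \in N$. Either $G$ is abelian and $*$ is trivial on $N$, or $*$ is the
  canonical involution attached to $d$, and then $G$ is SLC with commutator $d$.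

  Conversely, $(\alpha\beta + \beta\alpha)(z) = \sum_g \alpha_g\,(\beta_{g^{-1}z} + \beta_{zg^{-1}})$,
  and pairing the summand of $g$ with that of $g^*$ (abelian case) or of $sg$ (SLC case) the
  terms cancel modulo $4$.
\<close>

section \<open>Sums over an involution and the group ring\<close>

lemma sum_involution_support_eq_0:
  assumes "finite S" "S \<subseteq> X"
    and outside: "\<And>x. x \<in> X - S \<Longrightarrow> T x = 0"
    and f_closed: "\<And>x. x \<in> X \<Longrightarrow> f x \<in> X"
    and f_invol: "\<And>x. x \<in> X \<Longrightarrow> f (f x) = x"
    and pairs: "\<And>x. x \<in> X \<Longrightarrow> T (f x) + T x = 0"
    and fixed: "\<And>x. x \<in> X \<Longrightarrow> f x = x \<Longrightarrow> T x = 0"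
  shows "sum T S = (0::'a::ab_group_add)"
proof -
  let ?S' = "{x \<in> S \<union> f ` S. f x \<noteq> x}"
  have "S \<union> f ` S \<subseteq> X" using assms(2) f_closed by auto
  then have "sum T S = sum T (S \<union> f ` S)"
    using assms(1) outside by (intro sum.mono_neutral_left) auto
  also have "\<dots> = sum T ?S'"
    using assms(1) fixed \<open>S \<union> f ` S \<subseteq> X\<close> by (intro sum.mono_neutral_right) auto
  also have "\<dots> = 0"
  proof (rule sum_involution_eq_0)
    fix x assume x: "x \<in> ?S'"
    then have "x \<in> X" using \<open>S \<union> f ` S \<subseteq> X\<close> by blast
    then show "T (f x) + T x = 0" "f (f x) = x" using pairs f_invol by blast+
    show "f x \<noteq> x" using x by blast
    show "f x \<in> ?S'" using x \<open>x \<in> X\<close> f_invol assms(2) by (auto intro: image_eqI[of _ f] simp: subset_iff)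
  qed
  finally show ?thesis .
qed

lemma gr_elem_support_finite: "gr_elem G a \<Longrightarrow> finite {g \<in> carrier G. a g \<noteq> 0}"
  unfolding gr_elem_def by (auto intro: finite_subset)

lemma anticommuting_set_iff:
  "anticommuting_set G S \<longleftrightarrow>
    (\<forall>a\<in>S. \<forall>b\<in>S. \<forall>z\<in>carrier G. gr_mult G a b z + gr_mult G b a z = 0)"
proof -
  have "gr_mult G a b z = - gr_mult G b a z \<longleftrightarrow> z \<in> carrier G \<longrightarrow> gr_mult G a b z + gr_mult G b a z = 0"
    for a b and z
    by (auto simp: gr_mult_def eq_neg_iff_add_eq_0)
  then show ?thesis
    unfolding anticommuting_set_def fun_eq_iff by blast
qed

lemma anticommuting_setD:
  "anticommuting_set G S \<Longrightarrow> a \<in> S \<Longrightarrow> b \<in> S \<Longrightarrow> z \<in> carrier G \<Longrightarrow>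
    gr_mult G a b z + gr_mult G b a z = 0"
  by (simp add: anticommuting_set_iff)

context group
begin

lemma mult_inv_cancel_left [simp]:
  "x \<in> carrier G \<Longrightarrow> y \<in> carrier G \<Longrightarrow> x \<otimes> (inv x \<otimes> y) = y"
  by (simp add: m_assoc [symmetric])

lemma inv_mult_cancel_left [simp]:
  "x \<in> carrier G \<Longrightarrow> y \<in> carrier G \<Longrightarrow> inv x \<otimes> (x \<otimes> y) = y"
  by (simp add: m_assoc [symmetric])

lemma gr_mult_eq_sum_right:
  assumes a: "gr_elem G a" and b: "gr_elem G b" and z: "z \<in> carrier G"
  shows "gr_mult G b a z = (\<Sum>g\<in>{g \<in> carrier G. a g \<noteq> 0}. a g * b (z \<otimes> inv g))"
proof -
  have "gr_mult G b a z = (\<Sum>h\<in>{h \<in> carrier G. b h \<noteq> 0}. b h * a (inv h \<otimes> z))"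
    using z by (simp add: gr_mult_def)
  also have "\<dots> = (\<Sum>g\<in>{g \<in> carrier G. a g \<noteq> 0}. a g * b (z \<otimes> inv g))"
  proof (rule sum.reindex_bij_witness_not_neutral
      [where S' = "{h \<in> carrier G. b h \<noteq> 0 \<and> a (inv h \<otimes> z) = 0}"
        and T' = "{g \<in> carrier G. a g \<noteq> 0 \<and> b (z \<otimes> inv g) = 0}"
        and j = "\<lambda>h. inv h \<otimes> z" and i = "\<lambda>g. z \<otimes> inv g"])
    show "finite {h \<in> carrier G. b h \<noteq> 0 \<and> a (inv h \<otimes> z) = 0}"
      using gr_elem_support_finite[OF b] by (rule finite_subset[rotated]) blast
    show "finite {g \<in> carrier G. a g \<noteq> 0 \<and> b (z \<otimes> inv g) = 0}"
      using gr_elem_support_finite[OF a] by (rule finite_subset[rotated]) blast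
  qed (use z in \<open>auto simp: inv_mult_group m_assoc mult.commute\<close>)
  finally show ?thesis .
qed

lemma gr_mult_add_swap:
  assumes "gr_elem G a" "gr_elem G b" "z \<in> carrier G"
  shows "gr_mult G a b z + gr_mult G b a z =
    (\<Sum>g\<in>{g \<in> carrier G. a g \<noteq> 0}. a g * (b (inv g \<otimes> z) + b (z \<otimes> inv g)))"
  unfolding gr_mult_eq_sum_right[OF assms]
  using assms(3) by (simp add: gr_mult_def sum.distrib distrib_left)

lemma gr_mult_indicator:
  assumes "finite U" "U \<subseteq> carrier G" "z \<in> carrier G"
  shows "gr_mult G (indicator U) b z = (\<Sum>u\<in>U. b (inv u \<otimes> z))"
proof -
  have "{g \<in> carrier G. (indicator U g :: 'r::comm_ring_1) \<noteq> 0} = U"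
    using assms(2) by (auto simp: indicator_def)
  then show ?thesis
    using assms by (simp add: gr_mult_def indicator_def)
qed

lemma gr_mult_anticommute_by_involution:
  assumes a: "gr_elem G a" and b: "gr_elem G b" and z: "z \<in> carrier G"
    and f_closed: "\<And>g. g \<in> carrier G \<Longrightarrow> f g \<in> carrier G"
    and f_invol: "\<And>g. g \<in> carrier G \<Longrightarrow> f (f g) = g"
    and pairs: "\<And>g. g \<in> carrier G \<Longrightarrow>
        a (f g) * (b (inv (f g) \<otimes> z) + b (z \<otimes> inv (f g)))
      + a g * (b (inv g \<otimes> z) + b (z \<otimes> inv g)) = 0"
    and fixed: "\<And>g. g \<in> carrier G \<Longrightarrow> f g = g \<Longrightarrow>
        a g * (b (inv g \<otimes> z) + b (z \<otimes> inv g)) = 0"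
  shows "gr_mult G a b z + gr_mult G b a z = 0"
  unfolding gr_mult_add_swap[OF a b z]
proof (rule sum_involution_support_eq_0[where X = "carrier G" and f = f])
  show "finite {g \<in> carrier G. a g \<noteq> 0}" by (rule gr_elem_support_finite[OF a])
qed (use f_closed f_invol pairs fixed in auto)

end

section \<open>Characteristic\<close>

lemma two_neq_zero_iff_CHAR: "(2::'a::comm_ring_1) \<noteq> 0 \<longleftrightarrow> CHAR('a) \<noteq> 2"
proof -
  have "(2::'a) = 0 \<longleftrightarrow> CHAR('a) dvd 2"
    using of_nat_eq_0_iff_char_dvd[of 2, where 'a = 'a] by simp
  also have "\<dots> \<longleftrightarrow> CHAR('a) = 2"
  proof
    assume "CHAR('a) dvd 2"
    moreover have "CHAR('a) \<in> {..2}"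
      using dvd_imp_le[OF \<open>CHAR('a) dvd 2\<close>] by simp
    ultimately show "CHAR('a) = 2"
      using CHAR_not_1[where 'a = 'a] by (auto simp: atMost_nat_numeral le_Suc_eq)
  qed simp
  finally show ?thesis by simp
qed

lemma CHAR_eq_4_iff: "CHAR('a::comm_ring_1) = 4 \<longleftrightarrow> (4::'a) = 0 \<and> (2::'a) \<noteq> 0"
proof -
  have "(4::'a) = 0 \<longleftrightarrow> CHAR('a) dvd 4"
    using of_nat_eq_0_iff_char_dvd[of 4, where 'a = 'a] by simp
  also have "\<dots> \<longleftrightarrow> CHAR('a) = 2 \<or> CHAR('a) = 4"
  proof
    assume "CHAR('a) dvd 4"
    moreover have "CHAR('a) \<in> {..4}"
      using dvd_imp_le[OF \<open>CHAR('a) dvd 4\<close>] by simp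
    ultimately show "CHAR('a) = 2 \<or> CHAR('a) = 4"
      using CHAR_not_1[where 'a = 'a] by (auto simp: atMost_nat_numeral le_Suc_eq)
  qed auto
  finally show ?thesis
    using two_neq_zero_iff_CHAR[where 'a = 'a] by auto
qed

lemma CHAR_4_of_bool_sum_eq_0:
  assumes "CHAR('a::comm_ring_1) = 4" and "(1 + of_bool p + of_bool q + of_bool r :: 'a) = 0"
  shows "p \<and> q \<and> r"
proof -
  have "of_nat (1 + of_bool p + of_bool q + of_bool r) = (0::'a)"
    using assms(2) by (simp only: of_nat_add of_nat_of_bool of_nat_1)
  then have "4 dvd (1 + of_bool p + of_bool q + of_bool r :: nat)"
    using assms(1) of_nat_eq_0_iff_char_dvd by metis
  then show ?thesis
    by (cases p; cases q; cases r; simp; presburger)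
qed

section \<open>Central elements and SLC groups\<close>

context group
begin

lemma central_elemD: "central_elem G c \<Longrightarrow> g \<in> carrier G \<Longrightarrow> c \<otimes> g = g \<otimes> c"
  unfolding central_elem_def by blast

lemma central_elem_left_commute:
  assumes c: "central_elem G c" and g: "g \<in> carrier G" and h: "h \<in> carrier G"
  shows "g \<otimes> (c \<otimes> h) = c \<otimes> (g \<otimes> h)"
proof -
  have c_carrier: "c \<in> carrier G" using c unfolding central_elem_def by blast
  have "g \<otimes> (c \<otimes> h) = g \<otimes> c \<otimes> h" using c_carrier g h by (simp add: m_assoc)
  also have "\<dots> = c \<otimes> g \<otimes> h" using central_elemD[OF c g] by simp
  finally show ?thesis using c_carrier g h by (simp add: m_assoc)
qed

lemma central_elem_mult_commute:
  assumes gh: "central_elem G (g \<otimes> h)" and g: "g \<in> carrier G" and h: "h \<in> carrier G"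
  shows "g \<otimes> h = h \<otimes> g"
proof -
  have "g \<otimes> (g \<otimes> h) = g \<otimes> (h \<otimes> g)"
    using central_elemD[OF gh g] g h by (simp add: m_assoc)
  then show ?thesis using g h by simp
qed

lemma central_elem_mult:
  assumes a: "central_elem G a" and b: "central_elem G b"
  shows "central_elem G (a \<otimes> b)"
  unfolding central_elem_def
proof (intro conjI ballI)
  have a_carrier: "a \<in> carrier G" and b_carrier: "b \<in> carrier G"
    using a b unfolding central_elem_def by blast+
  then show "a \<otimes> b \<in> carrier G" by simp
  fix h assume h: "h \<in> carrier G"
  have "a \<otimes> b \<otimes> h = a \<otimes> (h \<otimes> b)"
    using a_carrier b_carrier h central_elemD[OF b h] by (simp add: m_assoc)
  also have "\<dots> = h \<otimes> (a \<otimes> b)"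
    using central_elem_left_commute[OF a h b_carrier] central_elemD[OF a h]
      a_carrier b_carrier h by (simp add: m_assoc[symmetric])
  finally show "a \<otimes> b \<otimes> h = h \<otimes> (a \<otimes> b)" .
qed

lemma central_if_commutes_outside_subgroup:
  assumes H: "subgroup H G" and x: "x \<in> carrier G - H" and c: "c \<in> carrier G"
    and comm: "\<And>y. y \<in> carrier G - H \<Longrightarrow> c \<otimes> y = y \<otimes> c"
  shows "central_elem G c"
  unfolding central_elem_def
proof (intro conjI ballI c)
  fix g assume g: "g \<in> carrier G"
  show "c \<otimes> g = g \<otimes> c"
  proof (cases "g \<in> H")
    case True
    have "g \<otimes> x \<notin> H"
    proof
      assume "g \<otimes> x \<in> H"
      then have "inv g \<otimes> (g \<otimes> x) \<in> H"
        using subgroup.m_closed[OF H subgroup.m_inv_closed[OF H True]] by blast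
      then show False using g x by simp
    qed
    then have gx: "g \<otimes> x \<in> carrier G - H" using g x by simp
    have ix: "inv x \<in> carrier G - H"
      using H x subgroup.m_inv_closed[of H G "inv x"] by auto
    have "c \<otimes> g = c \<otimes> (g \<otimes> x) \<otimes> inv x" using c g x by (simp add: m_assoc)
    also have "\<dots> = g \<otimes> x \<otimes> (c \<otimes> inv x)" using comm[OF gx] c g x by (simp add: m_assoc)
    also have "\<dots> = g \<otimes> x \<otimes> (inv x \<otimes> c)" using comm[OF ix] by simp
    also have "\<dots> = g \<otimes> c" using c g x by (simp add: m_assoc)
    finally show ?thesis .
  qed (use comm g in blast)
qed

lemma group_commutator_closed [simp]:
  "g \<in> carrier G \<Longrightarrow> h \<in> carrier G \<Longrightarrow> group_commutator G g h \<in> carrier G"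
  unfolding group_commutator_def by simp

lemma mult_eq_mult_commutator:
  "g \<in> carrier G \<Longrightarrow> h \<in> carrier G \<Longrightarrow> g \<otimes> h = h \<otimes> g \<otimes> group_commutator G g h"
  unfolding group_commutator_def by (simp add: m_assoc)

lemma group_involution_cong:
  assumes "group_involution G f" "\<And>g. g \<in> carrier G \<Longrightarrow> f' g = f g"
  shows "group_involution G f'"
  using assms unfolding group_involution_def by simp

lemma SLC_group_commutator_cases:
  assumes "SLC_group G s" "g \<in> carrier G" "h \<in> carrier G"
  shows "g \<otimes> h = h \<otimes> g \<or> g \<otimes> h = h \<otimes> g \<otimes> s"
proof -
  have "group_commutator G g h \<in> {\<one>, s}"
    using assms unfolding SLC_group_def by blast
  then show ?thesis
    using mult_eq_mult_commutator[OF assms(2,3)] assms(2,3) by auto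
qed

lemma SLC_group_central:
  assumes slc: "SLC_group G s"
  shows "central_elem G s"
  unfolding central_elem_def
proof (intro conjI ballI)
  show s: "s \<in> carrier G" using slc unfolding SLC_group_def by blast
  fix h assume h: "h \<in> carrier G"
  have "h \<otimes> s \<noteq> s \<otimes> h \<otimes> s"
    using slc s h unfolding SLC_group_def by auto
  then show "s \<otimes> h = h \<otimes> s"
    using SLC_group_commutator_cases[OF slc h s] by auto
qed

lemma SLC_group_square:
  assumes slc: "SLC_group G s"
  shows "s \<otimes> s = \<one>"
proof -
  have s: "s \<in> carrier G" and "s \<in> {group_commutator G g h | g h. g \<in> carrier G \<and> h \<in> carrier G}"
    using slc unfolding SLC_group_def by blast+
  then obtain g h where g: "g \<in> carrier G" and h: "h \<in> carrier G"
    and gh: "g \<otimes> h = h \<otimes> g \<otimes> s"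
    using mult_eq_mult_commutator by blast
  have "g \<otimes> h \<noteq> h \<otimes> g"
    using gh g h s slc unfolding SLC_group_def by (auto simp: m_assoc)
  then have "h \<otimes> g = g \<otimes> h \<otimes> s"
    using SLC_group_commutator_cases[OF slc h g] by auto
  then have "g \<otimes> h = g \<otimes> h \<otimes> (s \<otimes> s)"
    using gh g h s by (simp add: m_assoc)
  then show ?thesis
    using g h s by simp
qed

lemma SLC_group_commute_cases:
  assumes slc: "SLC_group G s" and g: "g \<in> carrier G" and h: "h \<in> carrier G"
  shows "g \<otimes> h = h \<otimes> g \<or> g \<otimes> h = s \<otimes> (h \<otimes> g)"
  using SLC_group_commutator_cases[OF slc g h] central_elemD[OF SLC_group_central[OF slc]] g h
  by (metis m_closed)

lemma SLC_group_conjugate: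
  assumes slc: "SLC_group G s" and g: "g \<in> carrier G" and y: "y \<in> carrier G"
  shows "g \<otimes> y \<otimes> inv g = (if g \<otimes> y = y \<otimes> g then y else s \<otimes> y)"
proof (cases "g \<otimes> y = y \<otimes> g")
  case True
  then show ?thesis using g y by (simp add: m_assoc)
next
  case False
  then have "g \<otimes> y \<otimes> inv g = s \<otimes> (y \<otimes> g) \<otimes> inv g"
    using SLC_group_commute_cases[OF slc g y] by simp
  also have "\<dots> = s \<otimes> y"
    using slc g y unfolding SLC_group_def by (simp add: m_assoc)
  finally show ?thesis using False by simp
qed

context
  fixes s :: 'a
  assumes s_central: "central_elem G s"
    and canonical: "group_involution G (canonical_involution G s)"
begin

lemma canonical_involution_noncentral_mult:
  assumes g: "g \<in> carrier G" "\<not> central_elem G g" and h: "h \<in> carrier G" "\<not> central_elem G h"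
    and gh: "\<not> central_elem G (g \<otimes> h)"
  shows "g \<otimes> h = s \<otimes> (h \<otimes> g)"
proof -
  have s: "s \<in> carrier G" using s_central unfolding central_elem_def by blast
  have "s \<otimes> (g \<otimes> h) = canonical_involution G s (g \<otimes> h)"
    using gh unfolding canonical_involution_def by simp
  also have "\<dots> = s \<otimes> h \<otimes> (s \<otimes> g)"
    using canonical g h unfolding group_involution_def canonical_involution_def by auto
  also have "\<dots> = s \<otimes> s \<otimes> (h \<otimes> g)"
    using central_elem_left_commute[OF s_central h(1) g(1)] s g h by (simp add: m_assoc)
  also have "\<dots> = s \<otimes> (s \<otimes> (h \<otimes> g))"
    using s g h by (simp add: m_assoc)
  finally show ?thesis
    using s g h by simp
qed

lemma canonical_involution_commutator:
  assumes s_neq: "s \<noteq> \<one>" and g: "g \<in> carrier G" and h: "h \<in> carrier G"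
  shows "group_commutator G g h = (if g \<otimes> h = h \<otimes> g then \<one> else s)"
proof -
  have s: "s \<in> carrier G" using s_central unfolding central_elem_def by blast
  have "g \<otimes> h = h \<otimes> g \<or> g \<otimes> h = h \<otimes> g \<otimes> s \<and> g \<otimes> h \<noteq> h \<otimes> g"
  proof (cases "central_elem G g \<or> central_elem G h \<or> central_elem G (g \<otimes> h)")
    case True
    then show ?thesis using central_elemD central_elem_mult_commute g h by metis
  next
    case False
    then have "g \<otimes> h = h \<otimes> g \<otimes> s"
      using canonical_involution_noncentral_mult central_elemD[OF s_central] g h by auto
    then show ?thesis using s_neq s g h by (auto simp: m_assoc)
  qed
  then show ?thesis
    using mult_eq_mult_commutator[OF g h] s g h by auto
qed

lemma SLC_group_if_canonical_involution:
  assumes s_neq: "s \<noteq> \<one>" and noncomm: "\<not> comm_group G"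
  shows "SLC_group G s"
proof -
  have s: "s \<in> carrier G" using s_central unfolding central_elem_def by blast
  note commutator = canonical_involution_commutator[OF s_neq]
  obtain a b where a: "a \<in> carrier G" and b: "b \<in> carrier G" and "a \<otimes> b \<noteq> b \<otimes> a"
    using noncomm group_comm_groupI by blast
  then have ab: "group_commutator G a b = s"
    using commutator by simp
  have one: "group_commutator G \<one> \<one> = \<one>"
    using commutator by simp
  have "{group_commutator G g h | g h. g \<in> carrier G \<and> h \<in> carrier G} = {\<one>, s}"
  proof
    show "{group_commutator G g h | g h. g \<in> carrier G \<and> h \<in> carrier G} \<subseteq> {\<one>, s}"
      using commutator by auto
    show "{\<one>, s} \<subseteq> {group_commutator G g h | g h. g \<in> carrier G \<and> h \<in> carrier G}"
      using ab[symmetric] one[symmetric] a b one_closed by blast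
  qed
  moreover have "central_elem G g \<or> central_elem G h \<or> central_elem G (g \<otimes> h)"
    if "g \<in> carrier G" "h \<in> carrier G" "g \<otimes> h = h \<otimes> g" for g h
  proof (rule ccontr)
    assume "\<not> (central_elem G g \<or> central_elem G h \<or> central_elem G (g \<otimes> h))"
    then have "g \<otimes> h = s \<otimes> (g \<otimes> h)"
      using canonical_involution_noncentral_mult[of g h] that by auto
    then show False
      using s_neq s that by simp
  qed
  ultimately show ?thesis
    using s s_neq unfolding SLC_group_def by blast
qed

end

end

section \<open>Oriented involutions and skew elements\<close>

locale oriented_involution = group G for G (structure) +
  fixes star :: "'a \<Rightarrow> 'a" and \<sigma> :: "'a \<Rightarrow> int"
  assumes involution: "group_involution G star"
    and orientation: "orientation G \<sigma>"
    and sigma_star [simp]: "g \<in> carrier G \<Longrightarrow> \<sigma> (star g) = \<sigma> g"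
begin

lemma star_closed [simp]: "g \<in> carrier G \<Longrightarrow> star g \<in> carrier G"
  using involution unfolding group_involution_def by blast

lemma star_mult: "g \<in> carrier G \<Longrightarrow> h \<in> carrier G \<Longrightarrow> star (g \<otimes> h) = star h \<otimes> star g"
  using involution unfolding group_involution_def by blast

lemma star_star [simp]: "g \<in> carrier G \<Longrightarrow> star (star g) = g"
  using involution unfolding group_involution_def by blast

lemma star_one [simp]: "star \<one> = \<one>"
  using star_mult[of \<one> \<one>] by (metis l_cancel_one' one_closed r_one star_closed)

lemma star_inv: "g \<in> carrier G \<Longrightarrow> star (inv g) = inv (star g)"
  using star_mult[of g "inv g"] by (intro inv_equality[symmetric]) simp_all

lemma sigma_cases: "g \<in> carrier G \<Longrightarrow> \<sigma> g = 1 \<or> \<sigma> g = -1"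
  using orientation unfolding orientation_def by blast

lemma sigma_mult [simp]: "g \<in> carrier G \<Longrightarrow> h \<in> carrier G \<Longrightarrow> \<sigma> (g \<otimes> h) = \<sigma> g * \<sigma> h"
  using orientation unfolding orientation_def by blast

lemma sigma_one [simp]: "\<sigma> \<one> = 1"
  using sigma_mult[of \<one> \<one>] sigma_cases[of \<one>] by auto

lemma sigma_inv [simp]: "g \<in> carrier G \<Longrightarrow> \<sigma> (inv g) = \<sigma> g"
  using sigma_mult[of g "inv g"] sigma_cases[of g] sigma_cases[of "inv g"] by auto

lemma even_subgroup: "subgroup {g \<in> carrier G. \<sigma> g = 1} G"
  by (rule subgroupI) auto

lemma central_if_commutes_with_odd:
  assumes x: "x \<in> carrier G" "\<sigma> x = -1" and c: "c \<in> carrier G"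
    and comm: "\<And>y. y \<in> carrier G \<Longrightarrow> \<sigma> y = -1 \<Longrightarrow> c \<otimes> y = y \<otimes> c"
  shows "central_elem G c"
  using x c comm sigma_cases
  by (intro central_if_commutes_outside_subgroup[OF even_subgroup]) fastforce+

lemma gr_skew_star:
  assumes "a \<in> gr_skew G star \<sigma>" "w \<in> carrier G"
  shows "a (star w) = - of_int (\<sigma> w) * a w"
proof -
  have "gr_sharp G star \<sigma> a w = - a w"
    using assms(1) unfolding gr_skew_def by simp
  then have "of_int (\<sigma> w) * a (star w) = - a w"
    using assms(2) by (simp add: gr_sharp_def)
  then show ?thesis
    using sigma_cases[OF assms(2)] by auto
qed

lemma gr_skew_fixed:
  assumes "a \<in> gr_skew G star \<sigma>" "w \<in> carrier G" "\<sigma> w = 1" "star w = w"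
  shows "a w + a w = 0"
  using gr_skew_star[OF assms(1,2)] assms(3,4) by simp

lemma indicator_star_orbit_gr_skew:
  assumes x: "x \<in> carrier G" and odd: "\<sigma> x = -1"
  shows "indicator {x, star x} \<in> gr_skew G star \<sigma>"
proof -
  have "star w \<in> {x, star x} \<longleftrightarrow> w \<in> {x, star x}" if "w \<in> carrier G" for w
    using that x by (metis insert_iff singletonD star_star)
  moreover have "\<sigma> w = -1" if "w \<in> {x, star x}" for w
    using that x odd by auto
  ultimately show ?thesis
    using x unfolding gr_skew_def gr_elem_def gr_sharp_def
    by (auto simp: indicator_def fun_eq_iff)
qed

end

section \<open>Necessity\<close>

context oriented_involution
begin

lemma anticommuting_odd_star_neq:
  assumes ac: "anticommuting_set G (gr_skew G star \<sigma> :: ('a \<Rightarrow> 'r::comm_ring_1) set)"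
    and two: "(2::'r) \<noteq> 0" and x: "x \<in> carrier G" and odd: "\<sigma> x = -1"
  shows "star x \<noteq> x"
proof
  assume fixed: "star x = x"
  let ?a = "indicator {x} :: 'a \<Rightarrow> 'r"
  have "?a \<in> gr_skew G star \<sigma>"
    using indicator_star_orbit_gr_skew[OF x odd] fixed by simp
  then have "gr_mult G ?a ?a (x \<otimes> x) + gr_mult G ?a ?a (x \<otimes> x) = 0"
    using ac x by (intro anticommuting_setD) simp_all
  moreover have "gr_mult G ?a ?a (x \<otimes> x) = 1"
    using x by (simp add: gr_mult_indicator)
  ultimately show False
    using two by simp
qed

lemma anticommuting_four_eq_0:
  assumes ac: "anticommuting_set G (gr_skew G star \<sigma> :: ('a \<Rightarrow> 'r::comm_ring_1) set)"
    and two: "(2::'r) \<noteq> 0" and x: "x \<in> carrier G" and odd: "\<sigma> x = -1"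
  shows "(4::'r) = 0"
proof -
  let ?a = "indicator {x, star x} :: 'a \<Rightarrow> 'r"
  let ?q = "inv (star x) \<otimes> (x \<otimes> star x) \<in> {x, star x}"
  have "star x \<noteq> x" by (rule anticommuting_odd_star_neq[OF ac two x odd])
  then have "gr_mult G ?a ?a (x \<otimes> star x) = 1 + of_bool ?q"
    using x by (simp add: gr_mult_indicator indicator_def)
  moreover have "gr_mult G ?a ?a (x \<otimes> star x) + gr_mult G ?a ?a (x \<otimes> star x) = 0"
    using ac x indicator_star_orbit_gr_skew[OF x odd] by (intro anticommuting_setD) simp_all
  ultimately have "(2::'r) + 2 * of_bool ?q = 0"
    by (simp add: algebra_simps)
  then show ?thesis
    using two by (cases ?q) simp_all
qed

lemma anticommuting_odd_mult:
  assumes ac: "anticommuting_set G (gr_skew G star \<sigma> :: ('a \<Rightarrow> 'r::comm_ring_1) set)"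
    and char: "CHAR('r) = 4"
    and x: "x \<in> carrier G" "\<sigma> x = -1" and y: "y \<in> carrier G" "\<sigma> y = -1"
  shows "x \<otimes> y = star x \<otimes> star y \<and> (x \<otimes> y = y \<otimes> x \<or> x \<otimes> y = star y \<otimes> x)"
proof -
  let ?a = "indicator {x, star x} :: 'a \<Rightarrow> 'r" and ?b = "indicator {y, star y} :: 'a \<Rightarrow> 'r"
  have two: "(2::'r) \<noteq> 0" using char by (simp add: CHAR_eq_4_iff)
  have x_ne: "star x \<noteq> x" and y_ne: "star y \<noteq> y"
    using anticommuting_odd_star_neq[OF ac two] x y by blast+
  \<comment> \<open>\<open>(ab + ba)(xy)\<close> is a sum of four values in \<open>{0, 1}\<close>, the first of which is \<open>1\<close>;
    in characteristic 4 all of them must be \<open>1\<close>.\<close>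
  let ?p = "inv (star x) \<otimes> (x \<otimes> y) \<in> {y, star y}"
  let ?q = "inv y \<otimes> (x \<otimes> y) \<in> {x, star x}"
  let ?r = "inv (star y) \<otimes> (x \<otimes> y) \<in> {x, star x}"
  have "gr_mult G ?a ?b (x \<otimes> y) = 1 + of_bool ?p"
    using x y x_ne by (simp add: gr_mult_indicator indicator_def)
  moreover have "gr_mult G ?b ?a (x \<otimes> y) = of_bool ?q + of_bool ?r"
    using x y y_ne by (simp add: gr_mult_indicator indicator_def)
  moreover have "gr_mult G ?a ?b (x \<otimes> y) + gr_mult G ?b ?a (x \<otimes> y) = 0"
    using ac x y indicator_star_orbit_gr_skew by (intro anticommuting_setD) simp_all
  ultimately have "?p \<and> ?q \<and> ?r"
    by (intro CHAR_4_of_bool_sum_eq_0[OF char]) (simp add: add.assoc)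
  then have "x \<otimes> y = star x \<otimes> star y"
    and "x \<otimes> y = y \<otimes> x \<or> x \<otimes> y = y \<otimes> star x"
    and "x \<otimes> y = star y \<otimes> x \<or> x \<otimes> y = star y \<otimes> star x"
    using x y x_ne by (auto simp: inv_solve_left')
  moreover have "y \<otimes> star x \<noteq> star y \<otimes> star x"
    using x y y_ne by simp
  ultimately show ?thesis
    by auto
qed

end

locale odd_star_structure = oriented_involution +
  fixes x\<^sub>0 :: 'a
  assumes x\<^sub>0: "x\<^sub>0 \<in> carrier G" "\<sigma> x\<^sub>0 = -1"
    and odd_star_neq: "x \<in> carrier G \<Longrightarrow> \<sigma> x = -1 \<Longrightarrow> star x \<noteq> x"
    and odd_mult_star: "x \<in> carrier G \<Longrightarrow> \<sigma> x = -1 \<Longrightarrow> y \<in> carrier G \<Longrightarrow> \<sigma> y = -1 \<Longrightarrow>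
      x \<otimes> y = star x \<otimes> star y"
    and odd_commute_cases: "x \<in> carrier G \<Longrightarrow> \<sigma> x = -1 \<Longrightarrow> y \<in> carrier G \<Longrightarrow> \<sigma> y = -1 \<Longrightarrow>
      x \<otimes> y = y \<otimes> x \<or> x \<otimes> y = star y \<otimes> x"
begin

text \<open>By \<open>star_odd\<close>, \<open>star y = star_shift \<otimes> y\<close> for every odd \<open>y\<close>; in the non-abelian case
  \<open>star_shift\<close> is the commutator of the SLC group.\<close>

definition star_shift :: 'a where
  "star_shift = inv (star x\<^sub>0) \<otimes> x\<^sub>0"

lemma star_shift_closed [simp]: "star_shift \<in> carrier G"
  using x\<^sub>0 unfolding star_shift_def by simp

lemma star_odd:
  assumes "y \<in> carrier G" "\<sigma> y = -1"
  shows "star y = star_shift \<otimes> y"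
  using odd_mult_star[OF x\<^sub>0 assms] x\<^sub>0 assms
  unfolding star_shift_def by (simp add: m_assoc inv_solve_left)

lemma sigma_star_shift [simp]: "\<sigma> star_shift = 1"
  using x\<^sub>0 unfolding star_shift_def by simp

lemma star_even:
  assumes n: "n \<in> carrier G" "\<sigma> n = 1" and y: "y \<in> carrier G" "\<sigma> y = -1"
  shows "star n = inv y \<otimes> (n \<otimes> y)"
proof -
  have "star_shift \<otimes> (y \<otimes> star n) = star y \<otimes> star n"
    using star_odd[OF y] n y by (simp add: m_assoc)
  also have "\<dots> = star_shift \<otimes> (n \<otimes> y)"
    using star_odd[of "n \<otimes> y"] n y by (simp add: star_mult)
  finally show ?thesis
    using n y by (simp add: inv_solve_left)
qed

lemma star_star_shift [simp]: "star star_shift = star_shift"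
proof -
  have "star star_shift = star x\<^sub>0 \<otimes> inv x\<^sub>0"
    using x\<^sub>0 unfolding star_shift_def by (simp add: star_mult star_inv)
  also have "\<dots> = star_shift"
    using star_odd[OF x\<^sub>0] x\<^sub>0 by (simp add: m_assoc)
  finally show ?thesis .
qed

lemma star_shift_central: "central_elem G star_shift"
proof (rule central_if_commutes_with_odd[OF x\<^sub>0 star_shift_closed])
  fix y assume y: "y \<in> carrier G" "\<sigma> y = -1"
  then show "star_shift \<otimes> y = y \<otimes> star_shift"
    using star_even[OF star_shift_closed sigma_star_shift y] by (simp add: inv_solve_left)
qed

lemma star_shift_square: "star_shift \<otimes> star_shift = \<one>"
proof -
  have "x\<^sub>0 = star (star x\<^sub>0)"
    using x\<^sub>0 by simp
  also have "\<dots> = star (star_shift \<otimes> x\<^sub>0)"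
    using star_odd[OF x\<^sub>0] by simp
  also have "\<dots> = star_shift \<otimes> star_shift \<otimes> x\<^sub>0"
    using star_odd[of "star_shift \<otimes> x\<^sub>0"] x\<^sub>0 by (simp add: m_assoc)
  finally show ?thesis
    using x\<^sub>0 by simp
qed

lemma star_shift_neq_one: "star_shift \<noteq> \<one>"
  using star_odd[OF x\<^sub>0] odd_star_neq[OF x\<^sub>0] x\<^sub>0 by auto

lemma star_even_cases:
  assumes n: "n \<in> carrier G" "\<sigma> n = 1"
  shows "star n = n \<or> star n = star_shift \<otimes> n"
proof -
  have nx: "n \<otimes> x\<^sub>0 \<in> carrier G" "\<sigma> (n \<otimes> x\<^sub>0) = -1"
    using x\<^sub>0 n by auto
  have star_n: "star n = inv x\<^sub>0 \<otimes> (n \<otimes> x\<^sub>0)"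
    by (rule star_even[OF n x\<^sub>0])
  consider "x\<^sub>0 \<otimes> (n \<otimes> x\<^sub>0) = n \<otimes> x\<^sub>0 \<otimes> x\<^sub>0" | "x\<^sub>0 \<otimes> (n \<otimes> x\<^sub>0) = star (n \<otimes> x\<^sub>0) \<otimes> x\<^sub>0"
    using odd_commute_cases[OF x\<^sub>0 nx] by blast
  then show ?thesis
  proof cases
    case 1
    then have "n \<otimes> x\<^sub>0 = x\<^sub>0 \<otimes> n"
      using n x\<^sub>0 by (simp add: m_assoc[symmetric])
    then show ?thesis
      using star_n n x\<^sub>0 by simp
  next
    case 2
    then have "x\<^sub>0 \<otimes> n = star_shift \<otimes> (n \<otimes> x\<^sub>0)"
      using star_odd[OF nx] n x\<^sub>0 by (simp add: m_assoc[symmetric])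
    then have "n \<otimes> x\<^sub>0 = star_shift \<otimes> (x\<^sub>0 \<otimes> n)"
      using star_shift_square n x\<^sub>0 by (simp add: m_assoc[symmetric])
    then show ?thesis
      using star_n central_elem_left_commute[OF star_shift_central, of "inv x\<^sub>0"] n x\<^sub>0 by simp
  qed
qed

lemma star_even_if_comm_group:
  assumes "comm_group G" "n \<in> carrier G" "\<sigma> n = 1"
  shows "star n = n"
proof -
  interpret comm_group G by fact
  show ?thesis
    using star_even[OF assms(2,3) x\<^sub>0] m_comm[of n x\<^sub>0] assms(2) x\<^sub>0
    by simp
qed

lemma odd_not_central_if_noncomm:
  assumes noncomm: "\<not> comm_group G" and y: "y \<in> carrier G" "\<sigma> y = -1"
  shows "\<not> central_elem G y"
proof
  assume y_central: "central_elem G y"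
  have even_fixed: "star n = n" if "n \<in> carrier G" "\<sigma> n = 1" for n
    using star_even[OF that y] central_elemD[OF y_central that(1), symmetric] that y by simp
  have even_commute: "n \<otimes> m = m \<otimes> n"
    if "n \<in> carrier G" "\<sigma> n = 1" "m \<in> carrier G" "\<sigma> m = 1" for n m
    using even_fixed[of "n \<otimes> m"] even_fixed[of n] even_fixed[of m] that by (simp add: star_mult)
  have even_central: "central_elem G n" if n: "n \<in> carrier G" "\<sigma> n = 1" for n
  proof (rule central_if_commutes_with_odd[OF y n(1)])
    fix g assume g: "g \<in> carrier G" "\<sigma> g = -1"
    then have "n \<otimes> (inv y \<otimes> g) = inv y \<otimes> g \<otimes> n"
      using even_commute n y by simp
    then have "y \<otimes> (n \<otimes> (inv y \<otimes> g)) = g \<otimes> n"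
      using n g y by (simp add: m_assoc)
    moreover have "n \<otimes> g = y \<otimes> (n \<otimes> (inv y \<otimes> g))"
      using central_elem_left_commute[OF y_central n(1), of "inv y \<otimes> g"] n g y by simp
    ultimately show "n \<otimes> g = g \<otimes> n"
      by simp
  qed
  have "central_elem G g" if g: "g \<in> carrier G" for g
  proof (cases "\<sigma> g = 1")
    case False
    then have "\<sigma> (inv y \<otimes> g) = 1"
      using sigma_cases g y by auto
    then have "central_elem G (y \<otimes> (inv y \<otimes> g))"
      using g y by (intro central_elem_mult[OF y_central] even_central) simp_all
    then show ?thesis using g y by simp
  qed (use even_central g in blast)
  then have "comm_group G"
    by (intro group_comm_groupI) (simp add: central_elemD)
  then show False using noncomm by blast
qed

lemma star_eq_canonical_involution:
  assumes noncomm: "\<not> comm_group G" and g: "g \<in> carrier G"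
  shows "star g = canonical_involution G star_shift g"
proof (cases "central_elem G g")
  case True
  then have "\<sigma> g = 1"
    using odd_not_central_if_noncomm[OF noncomm g] sigma_cases[OF g] by auto
  then show ?thesis
    using star_even[OF g _ x\<^sub>0] central_elemD[OF True] g x\<^sub>0 True
    unfolding canonical_involution_def by simp
next
  case False
  have "star g = star_shift \<otimes> g"
  proof (cases "\<sigma> g = 1")
    case True
    have "star g \<noteq> g"
    proof
      assume fixed: "star g = g"
      have "central_elem G g"
        using star_even[OF g True] fixed g
        by (intro central_if_commutes_with_odd[OF x\<^sub>0 g]) (simp add: inv_solve_left)
      then show False using False by blast
    qed
    then show ?thesis using star_even_cases[OF g True] by blast
  next
    case False
    then show ?thesis using star_odd g sigma_cases by blast
  qed
  then show ?thesis
    using False unfolding canonical_involution_def by simp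
qed

lemma comm_group_or_SLC_group:
  "(comm_group G \<and> (\<forall>n\<in>carrier G. \<sigma> n = 1 \<longrightarrow> star n = n)) \<or>
   (\<exists>s. SLC_group G s \<and> (\<forall>g\<in>carrier G. star g = canonical_involution G s g))"
proof (cases "comm_group G")
  case True
  then show ?thesis using star_even_if_comm_group by blast
next
  case False
  then have "SLC_group G star_shift"
    using star_shift_central star_shift_neq_one
      group_involution_cong[OF involution star_eq_canonical_involution[OF False, symmetric]]
    by (intro SLC_group_if_canonical_involution)
  then show ?thesis
    using star_eq_canonical_involution[OF False] by blast
qed

end

section \<open>Sufficiency\<close>

context oriented_involution
begin

lemma gr_skew_mult_double_eq_0:
  assumes a: "a \<in> gr_skew G star \<sigma>" and b: "b \<in> gr_skew G star \<sigma>"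
    and even_fixed: "\<And>n. n \<in> carrier G \<Longrightarrow> \<sigma> n = 1 \<Longrightarrow> star n = n"
    and g: "g \<in> carrier G" and y: "y \<in> carrier G" and even: "\<sigma> g = 1 \<or> \<sigma> y = 1"
  shows "a g * (b y + b y) = 0"
  using even
proof
  assume "\<sigma> g = 1"
  then have "a g + a g = 0"
    using gr_skew_fixed[OF a g] even_fixed g by simp
  then show ?thesis
    by (simp only: distrib_left flip: distrib_right) simp
next
  assume "\<sigma> y = 1"
  then show ?thesis
    using gr_skew_fixed[OF b y] even_fixed y by simp
qed

lemma anticommuting_if_comm_group:
  assumes four: "(4::'r::comm_ring_1) = 0" and comm: "comm_group G"
    and even_fixed: "\<And>n. n \<in> carrier G \<Longrightarrow> \<sigma> n = 1 \<Longrightarrow> star n = n"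
    and odd_moved: "\<And>x. x \<in> carrier G \<Longrightarrow> \<sigma> x = -1 \<Longrightarrow> star x \<noteq> x"
  shows "anticommuting_set G (gr_skew G star \<sigma> :: ('a \<Rightarrow> 'r) set)"
  unfolding anticommuting_set_iff
proof (intro ballI)
  interpret comm_group G by (rule comm)
  fix a b :: "'a \<Rightarrow> 'r" and z
  assume a: "a \<in> gr_skew G star \<sigma>" and b: "b \<in> gr_skew G star \<sigma>" and z: "z \<in> carrier G"
  let ?T = "\<lambda>g. a g * (b (inv g \<otimes> z) + b (z \<otimes> inv g))"
  have T_comm: "?T g = a g * (b (inv g \<otimes> z) + b (inv g \<otimes> z))" if "g \<in> carrier G" for g
    using that z m_comm[of z "inv g"] by simp
  have T_even: "?T g = 0" if g: "g \<in> carrier G" and "\<sigma> g = 1 \<or> \<sigma> (inv g \<otimes> z) = 1" for g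
    using gr_skew_mult_double_eq_0[OF a b even_fixed g] T_comm[OF g] that z by simp
  show "gr_mult G a b z + gr_mult G b a z = 0"
  proof (rule gr_mult_anticommute_by_involution[where f = star])
    show "gr_elem G a" "gr_elem G b" using a b unfolding gr_skew_def by blast+
    fix g assume g: "g \<in> carrier G"
    show "star g = g \<Longrightarrow> ?T g = 0"
      using T_even g odd_moved sigma_cases by blast
    show "?T (star g) + ?T g = 0"
    proof (cases "\<sigma> g = 1 \<or> \<sigma> (inv g \<otimes> z) = 1")
      case True
      then show ?thesis using T_even[OF g] T_even[of "star g"] g z by simp
    next
      case False
      then have odd: "\<sigma> g = -1" "\<sigma> (inv g \<otimes> z) = -1" and "\<sigma> z = 1"
        using sigma_cases[OF g] sigma_cases[OF z] g z by auto
      then have "inv (star g) \<otimes> z = star (inv g \<otimes> z)"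
        using even_fixed[OF z] g z m_comm[of z "inv (star g)"] by (simp add: star_mult star_inv)
      then have "?T (star g) = ?T g"
        using T_comm[OF g] T_comm[of "star g"] gr_skew_star[OF a g] gr_skew_star[OF b, of "inv g \<otimes> z"]
          odd g z by simp
      then have "?T (star g) + ?T g = 4 * (a g * b (inv g \<otimes> z))"
        using T_comm[OF g] by (simp add: algebra_simps)
      then show ?thesis using four by simp
    qed
  qed (use z in simp_all)
qed

end

locale SLC_oriented_involution = oriented_involution +
  fixes s :: 'a
  assumes SLC: "SLC_group G s"
    and star_canonical: "g \<in> carrier G \<Longrightarrow> star g = canonical_involution G s g"
    and odd_star_neq: "x \<in> carrier G \<Longrightarrow> \<sigma> x = -1 \<Longrightarrow> star x \<noteq> x"
begin

lemma s_central: "central_elem G s"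
  by (rule SLC_group_central[OF SLC])

lemma s_closed [simp]: "s \<in> carrier G"
  using s_central unfolding central_elem_def by blast

lemma s_mult_s_cancel [simp]: "x \<in> carrier G \<Longrightarrow> s \<otimes> (s \<otimes> x) = x"
  using SLC_group_square[OF SLC] by (simp add: m_assoc[symmetric])

lemma inv_s [simp]: "inv s = s"
  using SLC_group_square[OF SLC] by (intro inv_equality) simp_all

lemma star_central: "central_elem G w \<Longrightarrow> star w = w"
  using star_canonical unfolding central_elem_def canonical_involution_def by auto

lemma sigma_central: "central_elem G w \<Longrightarrow> \<sigma> w = 1"
  using star_central odd_star_neq sigma_cases unfolding central_elem_def by blast

lemma gr_skew_central: "c \<in> gr_skew G star \<sigma> \<Longrightarrow> central_elem G w \<Longrightarrow> c w + c w = 0"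
  using gr_skew_fixed sigma_central star_central unfolding central_elem_def by blast

lemma gr_skew_noncentral:
  assumes "c \<in> gr_skew G star \<sigma>" "w \<in> carrier G" "\<not> central_elem G w"
  shows "c (s \<otimes> w) = - of_int (\<sigma> w) * c w"
  using gr_skew_star[OF assms(1,2)] star_canonical[OF assms(2)] assms(3)
  unfolding canonical_involution_def by simp

lemma gr_skew_shift_pair_commuting:
  fixes a b :: "'a \<Rightarrow> 'r::comm_ring_1"
  assumes four: "(4::'r) = 0" and a: "a \<in> gr_skew G star \<sigma>" and b: "b \<in> gr_skew G star \<sigma>"
    and g: "g \<in> carrier G" and y: "y \<in> carrier G" and gy: "g \<otimes> y = y \<otimes> g"
  shows "a (s \<otimes> g) * (b (s \<otimes> y) + b (s \<otimes> y)) + a g * (b y + b y) = 0"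
proof -
  consider "central_elem G g" | "central_elem G y" | "\<not> central_elem G g" "\<not> central_elem G y" "central_elem G (g \<otimes> y)"
    using SLC gy g y unfolding SLC_group_def by blast
  then show ?thesis
  proof cases
    case 1
    then have "a g + a g = 0" "a (s \<otimes> g) + a (s \<otimes> g) = 0"
      using gr_skew_central[OF a] central_elem_mult[OF s_central] by blast+
    then show ?thesis
      by (simp only: distrib_left flip: distrib_right) simp
  next
    case 2
    then have "b y + b y = 0" "b (s \<otimes> y) + b (s \<otimes> y) = 0"
      using gr_skew_central[OF b] central_elem_mult[OF s_central] by blast+
    then show ?thesis by simp
  next
    case 3
    then have "\<sigma> g * \<sigma> y = 1"
      using sigma_central[of "g \<otimes> y"] g y by simp
    then have "of_int (\<sigma> g) * of_int (\<sigma> y) = (1::'r)"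
      by (metis of_int_1 of_int_mult)
    have "a (s \<otimes> g) * (b (s \<otimes> y) + b (s \<otimes> y))
        = of_int (\<sigma> g) * of_int (\<sigma> y) * (a g * (b y + b y))"
      using gr_skew_noncentral[OF a g] gr_skew_noncentral[OF b y] 3 by (simp add: algebra_simps)
    then have "a (s \<otimes> g) * (b (s \<otimes> y) + b (s \<otimes> y)) = a g * (b y + b y)"
      using \<open>of_int (\<sigma> g) * of_int (\<sigma> y) = (1::'r)\<close> by simp
    then have "a (s \<otimes> g) * (b (s \<otimes> y) + b (s \<otimes> y)) + a g * (b y + b y) = 4 * (a g * b y)"
      by (simp add: algebra_simps)
    then show ?thesis using four by simp
  qed
qed

lemma gr_skew_shift_pair_noncommuting:
  fixes a b :: "'a \<Rightarrow> 'r::comm_ring_1"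
  assumes four: "(4::'r) = 0" and a: "a \<in> gr_skew G star \<sigma>" and b: "b \<in> gr_skew G star \<sigma>"
    and g: "g \<in> carrier G" and y: "y \<in> carrier G" and gy: "g \<otimes> y \<noteq> y \<otimes> g"
  shows "a (s \<otimes> g) * (b (s \<otimes> y) + b y) + a g * (b y + b (s \<otimes> y)) = 0"
proof -
  have "\<not> central_elem G g" "\<not> central_elem G y"
    using gy g y central_elemD by metis+
  then have "a (s \<otimes> g) * (b (s \<otimes> y) + b y) + a g * (b y + b (s \<otimes> y))
      = of_int ((1 - \<sigma> g) * (1 - \<sigma> y)) * (a g * b y)"
    using gr_skew_noncentral[OF a g] gr_skew_noncentral[OF b y] by (simp add: algebra_simps)
  moreover have "of_int ((1 - \<sigma> g) * (1 - \<sigma> y)) = (0::'r)"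
    using sigma_cases[OF g] sigma_cases[OF y] four by auto
  ultimately show ?thesis by simp
qed

lemma anticommuting_if_SLC_group:
  assumes four: "(4::'r::comm_ring_1) = 0"
  shows "anticommuting_set G (gr_skew G star \<sigma> :: ('a \<Rightarrow> 'r) set)"
  unfolding anticommuting_set_iff
proof (intro ballI)
  fix a b :: "'a \<Rightarrow> 'r" and z
  assume a: "a \<in> gr_skew G star \<sigma>" and b: "b \<in> gr_skew G star \<sigma>" and z: "z \<in> carrier G"
  show "gr_mult G a b z + gr_mult G b a z = 0"
  proof (rule gr_mult_anticommute_by_involution[where f = "\<lambda>g. s \<otimes> g"])
    show "gr_elem G a" "gr_elem G b" using a b unfolding gr_skew_def by blast+
    fix g assume g: "g \<in> carrier G"
    define y where "y = inv g \<otimes> z"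
    have y: "y \<in> carrier G" and z_eq: "z = g \<otimes> y"
      using g z unfolding y_def by simp_all
    have "inv (s \<otimes> g) \<otimes> z = s \<otimes> y" "z \<otimes> inv (s \<otimes> g) = s \<otimes> (z \<otimes> inv g)"
      using central_elem_left_commute[OF s_central] central_elemD[OF s_central, of "inv g", symmetric] g z
      unfolding y_def by (simp_all add: inv_mult_group m_assoc)
    moreover have "z \<otimes> inv g = (if g \<otimes> y = y \<otimes> g then y else s \<otimes> y)"
      using SLC_group_conjugate[OF SLC g y] z_eq by simp
    ultimately show "a (s \<otimes> g) * (b (inv (s \<otimes> g) \<otimes> z) + b (z \<otimes> inv (s \<otimes> g)))
        + a g * (b (inv g \<otimes> z) + b (z \<otimes> inv g)) = 0"
      using gr_skew_shift_pair_commuting[OF four a b g y] gr_skew_shift_pair_noncommuting[OF four a b g y] y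
      unfolding y_def by auto
    show "s \<otimes> g = g \<Longrightarrow> a g * (b (inv g \<otimes> z) + b (z \<otimes> inv g)) = 0"
      using SLC g unfolding SLC_group_def by simp
  qed (use z in simp_all)
qed

end

context oriented_involution
begin

theorem anticommuting_gr_skew_iff:
  assumes odd_exists: "\<exists>x\<in>carrier G. \<sigma> x = -1" and char: "CHAR('r::comm_ring_1) \<noteq> 2"
  shows "anticommuting_set G (gr_skew G star \<sigma> :: ('a \<Rightarrow> 'r) set) \<longleftrightarrow>
    CHAR('r) = 4 \<and> (\<forall>x\<in>carrier G. \<sigma> x = -1 \<longrightarrow> star x \<noteq> x) \<and>
    ((comm_group G \<and> (\<forall>n\<in>carrier G. \<sigma> n = 1 \<longrightarrow> star n = n)) \<or>
     (\<exists>s. SLC_group G s \<and> (\<forall>g\<in>carrier G. star g = canonical_involution G s g)))"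
    (is "?anticomm \<longleftrightarrow> ?char4 \<and> ?odd_moved \<and> ?structure")
proof
  have two: "(2::'r) \<noteq> 0" using char by (simp add: two_neq_zero_iff_CHAR)
  obtain x where x: "x \<in> carrier G" "\<sigma> x = -1" using odd_exists by blast
  assume ac: ?anticomm
  have char4: ?char4
    using anticommuting_four_eq_0[OF ac two x] two by (simp add: CHAR_eq_4_iff)
  interpret odd_star_structure G star \<sigma> x
    using x anticommuting_odd_star_neq[OF ac two] anticommuting_odd_mult[OF ac char4]
    by unfold_locales blast+
  show "?char4 \<and> ?odd_moved \<and> ?structure"
    using char4 odd_star_neq comm_group_or_SLC_group by blast
next
  assume rhs: "?char4 \<and> ?odd_moved \<and> ?structure"
  then have four: "(4::'r) = 0" and odd_moved: "\<And>x. x \<in> carrier G \<Longrightarrow> \<sigma> x = -1 \<Longrightarrow> star x \<noteq> x"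
    by (auto simp: CHAR_eq_4_iff)
  show ?anticomm
    using rhs
  proof (elim conjE disjE exE)
    assume "comm_group G" "\<forall>n\<in>carrier G. \<sigma> n = 1 \<longrightarrow> star n = n"
    then show ?anticomm
      using anticommuting_if_comm_group[OF four _ _ odd_moved] by blast
  next
    fix s assume "SLC_group G s" "\<forall>g\<in>carrier G. star g = canonical_involution G s g"
    then interpret SLC_oriented_involution G star \<sigma> s
      using odd_moved by unfold_locales blast+
    show ?anticomm by (rule anticommuting_if_SLC_group[OF four])
  qed
qed

end

theorem mainTheorem1:
  fixes G :: "('g, 'b) monoid_scheme"
    and star :: "'g \<Rightarrow> 'g"
    and \<sigma> :: "'g \<Rightarrow> int"
    and N :: "'g set"
  assumes grp: "group G"
    and inv: "group_involution G star"
    and ori: "orientation G \<sigma>"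
    and nontriv: "\<exists>g\<in>carrier G. \<sigma> g \<noteq> 1"
    and N_def: "N = {g \<in> carrier G. \<sigma> g = 1}"
    and compat: "\<forall>g\<in>carrier G. \<sigma> (star g) = \<sigma> g"
    and char: "CHAR('r::comm_ring_1) \<noteq> 2"
  shows "anticommuting_set G (gr_skew G star \<sigma> :: ('g \<Rightarrow> 'r) set) \<longleftrightarrow>
      (CHAR('r) = 4 \<and> comm_group G \<and> (\<forall>x\<in>N. star x = x) \<and>
         (\<forall>x\<in>carrier G - N. star x \<noteq> x))
    \<or> (CHAR('r) = 4 \<and>
         (\<exists>s. SLC_group G s \<and> (\<forall>g\<in>carrier G. star g = canonical_involution G s g)) \<and>
         (\<forall>x\<in>carrier G - N. star x \<noteq> x))"
proof -
  interpret oriented_involution G star \<sigma>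
    using grp inv ori compat by (simp add: oriented_involution_def oriented_involution_axioms_def)
  have "\<exists>x\<in>carrier G. \<sigma> x = -1"
    using nontriv sigma_cases by blast
  moreover have "x \<in> carrier G - N \<longleftrightarrow> x \<in> carrier G \<and> \<sigma> x = -1" for x
    using N_def sigma_cases by auto
  ultimately show ?thesis
    using anticommuting_gr_skew_iff[OF _ char] N_def by auto
qed

end
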